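(* Let $n\ge 2$, $X=\{0,1\}^n$, let $C$ be the family of cylinders in $X$, and let $\mu$ be the uniform distribution on $X$. Then every weak $\frac14$-net for $C$ over $\mu$ has size at least $\log_2 n$.
   Context: A set $c\subseteq\{0,1\}^n$ is a cylinder if there are $Y\subseteq[n]$ and $v\in\{0,1\}^Y$ with $c=\{u\in\{0,1\}^n : u|_Y=v\}$. A weak $\varepsilon$-net for $C$ over $\mu$ is a set $S\subseteq X$ meeting every $c\in C$ with $\mu(c)\ge\varepsilon$. *)

theory Defs
  imports "HOL-Probability.Probability"
begin

definition cube :: "nat \<Rightarrow> bool list set" where
  "cube n = {u. length u = n}"

text \<open>Cylinder determined by Y \<subseteq> [n] and v : Y \<rightarrow> {0,1}
  (values of v outside Y are irrelevant).\<close>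
definition cylinder :: "nat \<Rightarrow> nat set \<Rightarrow> (nat \<Rightarrow> bool) \<Rightarrow> bool list set" where
  "cylinder n Y v = {u \<in> cube n. \<forall>i\<in>Y. u ! i = v i}"

definition cylinders :: "nat \<Rightarrow> bool list set set" where
  "cylinders n = {c. \<exists>Y v. Y \<subseteq> {..<n} \<and> c = cylinder n Y v}"

definition unif_cube :: "nat \<Rightarrow> bool list pmf" where
  "unif_cube n = pmf_of_set (cube n)"

definition weak_eps_net :: "'a set \<Rightarrow> 'a set set \<Rightarrow> 'a pmf \<Rightarrow> real \<Rightarrow> 'a set \<Rightarrow> bool" where
  "weak_eps_net X C \<mu> \<epsilon> S \<longleftrightarrow> S \<subseteq> X \<and>
     (\<forall>c\<in>C. measure_pmf.prob \<mu> c \<ge> \<epsilon> \<longrightarrow> S \<inter> c \<noteq> {})"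

end

theory Submission
  imports Defs
begin

text \<open>For coordinates \<open>i \<noteq> j\<close> the cylinder \<open>{u. u\<^sub>i = 1, u\<^sub>j = 0}\<close> has measure \<open>1/4\<close>,
  so a weak \<open>1/4\<close>-net \<open>S\<close> contains a point separating \<open>i\<close> from \<open>j\<close>. Hence the traces
  \<open>{u \<in> S. u\<^sub>i = 1}\<close> of the \<open>n\<close> coordinates are pairwise distinct subsets of \<open>S\<close>,
  which forces \<open>n \<le> 2\<^bsup>|S|\<^esup>\<close>.\<close>

lemma finite_cube: "finite (cube n)"
proof -
  have "cube n = {xs. set xs \<subseteq> (UNIV :: bool set) \<and> length xs = n}"
    by (auto simp: cube_def)
  then show ?thesis
    using finite_lists_length_eq[of "UNIV :: bool set" n] by simp
qed

lemma cube_nonempty: "cube n \<noteq> {}"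
  using length_replicate[of n False] unfolding cube_def by blast

definition cylinder_proj :: "nat set \<Rightarrow> (nat \<Rightarrow> bool) \<Rightarrow> bool list \<Rightarrow> bool list" where
  "cylinder_proj Y v u = map (\<lambda>k. if k \<in> Y then v k else u ! k) [0..<length u]"

lemma cylinder_proj_in_cylinder:
  assumes "Y \<subseteq> {..<n}" and "u \<in> cube n"
  shows "cylinder_proj Y v u \<in> cylinder n Y v"
  using assms by (auto simp: cylinder_proj_def cylinder_def cube_def)

text \<open>A point of the cube is recovered from its projection onto the cylinder together
  with the set of coordinates in \<open>Y\<close> where it disagrees with \<open>v\<close>.\<close>
lemma card_cube_le_cylinder:
  assumes "Y \<subseteq> {..<n}"
  shows "card (cube n) \<le> 2 ^ card Y * card (cylinder n Y v)"
proof -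
  define \<phi> where "\<phi> u = ({i \<in> Y. u ! i \<noteq> v i}, cylinder_proj Y v u)" for u
  have "inj_on \<phi> (cube n)"
  proof (rule inj_onI)
    fix u w assume u: "u \<in> cube n" and w: "w \<in> cube n" and eq: "\<phi> u = \<phi> w"
    then have len: "length u = n" "length w = n" by (simp_all add: cube_def)
    show "u = w"
    proof (rule nth_equalityI)
      show "length u = length w" using len by simp
    next
      fix k assume k: "k < length u"
      have "{i \<in> Y. u ! i \<noteq> v i} = {i \<in> Y. w ! i \<noteq> v i}"
        using eq by (simp add: \<phi>_def)
      moreover have "cylinder_proj Y v u ! k = cylinder_proj Y v w ! k"
        using eq by (simp add: \<phi>_def)
      ultimately show "u ! k = w ! k"
        using k len by (cases "k \<in> Y") (auto simp: cylinder_proj_def)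
    qed
  qed
  moreover have "\<phi> ` cube n \<subseteq> Pow Y \<times> cylinder n Y v"
    using assms by (auto simp: \<phi>_def cylinder_proj_in_cylinder)
  moreover have "finite Y" using assms finite_subset by blast
  moreover have "finite (cylinder n Y v)"
    using finite_cube finite_subset by (fastforce simp: cylinder_def)
  ultimately have "card (cube n) \<le> card (Pow Y \<times> cylinder n Y v)"
    by (intro card_inj_on_le) auto
  with \<open>finite Y\<close> show ?thesis by (simp add: card_cartesian_product card_Pow)
qed

lemma prob_cylinder_ge:
  assumes "Y \<subseteq> {..<n}"
  shows "measure_pmf.prob (unif_cube n) (cylinder n Y v) \<ge> 1 / 2 ^ card Y"
proof -
  have "cube n \<inter> cylinder n Y v = cylinder n Y v" by (auto simp: cylinder_def)
  then have prob: "measure_pmf.prob (unif_cube n) (cylinder n Y v)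
      = card (cylinder n Y v) / card (cube n)"
    unfolding unif_cube_def using measure_pmf_of_set[OF cube_nonempty finite_cube] by simp
  have "real (card (cube n)) \<le> real (2 ^ card Y * card (cylinder n Y v))"
    using card_cube_le_cylinder[OF assms] by (simp only: of_nat_le_iff)
  then have "real (card (cube n)) \<le> 2 ^ card Y * real (card (cylinder n Y v))"
    by simp
  moreover have "card (cube n) > 0"
    using cube_nonempty finite_cube card_gt_0_iff by blast
  ultimately show ?thesis
    unfolding prob by (simp add: field_simps)
qed

lemma weak_net_separates_coordinates:
  assumes net: "weak_eps_net (cube n) (cylinders n) (unif_cube n) (1/4) S"
    and "i < n" "j < n" "i \<noteq> j"
  shows "\<exists>u\<in>S. u ! i \<and> \<not> u ! j"
proof -
  define c where "c = cylinder n {i, j} (\<lambda>k. k = i)"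
  have "c \<in> cylinders n"
    unfolding cylinders_def c_def using assms(2,3) by (intro CollectI exI[of _ "{i, j}"]) auto
  moreover have "measure_pmf.prob (unif_cube n) c \<ge> 1/4"
    using prob_cylinder_ge[of "{i, j}" n "\<lambda>k. k = i"] assms(2-4) by (simp add: c_def)
  ultimately obtain u where "u \<in> S" "u \<in> c"
    using net unfolding weak_eps_net_def by blast
  with \<open>i \<noteq> j\<close> show ?thesis by (auto simp: c_def cylinder_def)
qed

lemma card_le_two_power_if_separating:
  assumes "finite S"
    and separating: "\<And>i j. i \<in> I \<Longrightarrow> j \<in> I \<Longrightarrow> i \<noteq> j \<Longrightarrow> \<exists>u\<in>S. P u i \<and> \<not> P u j"
  shows "card I \<le> 2 ^ card S"
proof -
  have "inj_on (\<lambda>i. {u \<in> S. P u i}) I"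
  proof (rule inj_onI, rule ccontr)
    fix i j assume "i \<in> I" "j \<in> I" "{u \<in> S. P u i} = {u \<in> S. P u j}" "i \<noteq> j"
    then show False using separating by blast
  qed
  then have "card I \<le> card (Pow S)"
    using assms(1) by (intro card_inj_on_le) auto
  with assms(1) show ?thesis by (simp add: card_Pow)
qed

theorem claim1:
  fixes n :: nat and S :: "bool list set"
  assumes "n \<ge> 2"
    and "weak_eps_net (cube n) (cylinders n) (unif_cube n) (1/4) S"
  shows "real (card S) \<ge> log 2 (real n)"
proof -
  have "finite S"
    using assms(2) finite_cube finite_subset unfolding weak_eps_net_def by blast
  then have "card {..<n} \<le> 2 ^ card S"
    using weak_net_separates_coordinates[OF assms(2)]
    by (intro card_le_two_power_if_separating[where P = "\<lambda>u i. u ! i"]) auto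
  then show ?thesis
    using assms(1) by (intro log2_of_power_le) auto
qed

end
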